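(* Let $a$, $b$, $c$ be pairwise coprime positive integers with $a+c$ even. Then for all integers $p,q\geq1$ and all $x,y,z\in\mathbb{R}$, \begin{align*} a^{1-p}b^{1-q}S^{(3,5)}_{p,q}(a,b,c:x,y,z) &=-\frac{q}{2}\sum_{j=1}^{p}\binom{p-1}{j-1}a^{1-j}c^{1+j-p-q}S^{(4)}_{p+q-j,j}(c,-a,b:z,x,y)\\ &\quad+\sum_{h=0}^{q}\binom{q}{h}(-1)^{h}b^{1-h}c^{1+h-p-q}S^{(3,5)}_{p+q-h,h}(c,b,a:z,-y,x). \end{align*}
   Context: $B_n(x)$ is the $n$th Bernoulli polynomial ($\frac{te^{xt}}{e^t-1}=\sum B_n(x)\frac{t^n}{n!}$) and $\mathcal{B}_n(x)=B_n(x-[x])$ the $n$th Bernoulli function ($[x]$ the largest integer $\le x$; $\mathcal{B}_0\equiv1$). $E_n(x)$ is the $n$th Euler polynomial ($\frac{2e^{xt}}{e^t+1}=\sum E_n(x)\frac{t^n}{n!}$), and the Euler function $\mathcal{E}_n$ ($n\ge0$) is defined by $\mathcal{E}_n(x)=E_n(x)$ for $0\le x<1$ and $\mathcal{E}_n(x+m)=(-1)^m\mathcal{E}_n(x)$ for $m\in\mathbb{Z}$. For integers $a,b$, a positive integer $c$ and real $x,y,z$ define, for integers $p\ge1$, $q\ge0$, $$S^{(3,5)}_{p,q}(a,b,c:x,y,z)=\sum_{\mu=0}^{c-1}(-1)^{\mu}\mathcal{E}_{p-1}\Big(a\frac{\mu+z}{c}+x\Big)\mathcal{B}_{q}\Big(b\frac{\mu+z}{c}+y\Big),$$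 and, for integers $p,q\ge1$, $$S^{(4)}_{p,q}(a,b,c:x,y,z)=\sum_{\mu=0}^{c-1}\mathcal{E}_{p-1}\Big(a\frac{\mu+z}{c}+x\Big)\mathcal{E}_{q-1}\Big(b\frac{\mu+z}{c}+y\Big).$$ *)

theory Defs
  imports Complex_Main
begin

text \<open>Bernoulli polynomials, defined by comparing coefficients of t^(n+1)/(n+1)! in
  t e^(xt) = (e^t - 1) * sum B_n(x) t^n/n!, i.e. (n+1) x^n = sum_(k<=n) (n+1 choose k) B_k(x).\<close>
fun bernpoly :: "nat \<Rightarrow> real \<Rightarrow> real" where
  "bernpoly n x = ((real n + 1) * x ^ n
      - (\<Sum>k<n. real ((n + 1) choose k) * (if k < n then bernpoly k x else 0))) / (real n + 1)"

text \<open>Euler polynomials, defined by comparing coefficients of t^n/n! in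
  2 e^(xt) = (e^t + 1) * sum E_n(x) t^n/n!, i.e. 2 x^n = 2 E_n(x) + sum_(k<n) (n choose k) E_k(x).\<close>
fun eulerpoly :: "nat \<Rightarrow> real \<Rightarrow> real" where
  "eulerpoly n x = x ^ n
      - (\<Sum>k<n. real (n choose k) * (if k < n then eulerpoly k x else 0)) / 2"

definition bernfun :: "nat \<Rightarrow> real \<Rightarrow> real" where
  "bernfun n x = bernpoly n (x - of_int \<lfloor>x\<rfloor>)"

definition eulerfun :: "nat \<Rightarrow> real \<Rightarrow> real" where
  "eulerfun n x = (-1) powi \<lfloor>x\<rfloor> * eulerpoly n (x - of_int \<lfloor>x\<rfloor>)"

definition S35 :: "nat \<Rightarrow> nat \<Rightarrow> int \<Rightarrow> int \<Rightarrow> int \<Rightarrow> real \<Rightarrow> real \<Rightarrow> real \<Rightarrow> real" where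
  "S35 p q a b c x y z = (\<Sum>\<mu>\<in>{0..<nat c}.
      (-1) ^ \<mu> * eulerfun (p - 1) (of_int a * ((real \<mu> + z) / of_int c) + x)
               * bernfun q (of_int b * ((real \<mu> + z) / of_int c) + y))"

definition S4 :: "nat \<Rightarrow> nat \<Rightarrow> int \<Rightarrow> int \<Rightarrow> int \<Rightarrow> real \<Rightarrow> real \<Rightarrow> real \<Rightarrow> real" where
  "S4 p q a b c x y z = (\<Sum>\<mu>\<in>{0..<nat c}.
      eulerfun (p - 1) (of_int a * ((real \<mu> + z) / of_int c) + x)
      * eulerfun (q - 1) (of_int b * ((real \<mu> + z) / of_int c) + y))"

end

theory Submission
  imports Defs
begin

text \<open>
  Call F an Appell sequence if F_n' = n F_(n-1). For Appell sequences F, G, H and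
  r = -a/c, s = -b/c the kernel
    w |-> sum_(i<=P, j<=Q) (P choose i) (Q choose j) r^(P-i) s^(Q-j) F_i(aw+x) G_j(bw+y) H_(P+Q-i-j)(cw-z)
  has derivative zero. Take for F and H the Euler functions and for G the Bernoulli functions.
  Then the kernel is constant between the points where aw+x, bw+y or cw-z is an integer, and
  at such a point it jumps only through E_0, which changes sign, and B_1, which drops by 1.
  As a+c is even, the kernel has period 1, so its jumps over one period add up to zero.
  With P = p - 1 and Q = q, the jumps on the three families of points give 2 S^(3,5)_(p,q)(a,b,c),
  the S^(4)-sum and the S^(3,5)(c,b,a)-sum.
\<close>

section \<open>Bernoulli and Euler polynomials as Appell sequences\<close>

declare bernpoly.simps [simp del] eulerpoly.simps [simp del]

text \<open>The defining equations without the guard \<open>k < n\<close> that makes the recursion well-founded.\<close>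

lemma bernpoly_eq:
  "bernpoly n x = ((real n + 1) * x ^ n
      - (\<Sum>k<n. real (Suc n choose k) * bernpoly k x)) / (real n + 1)"
  by (subst bernpoly.simps) (auto intro!: sum.cong)

lemma eulerpoly_eq:
  "eulerpoly n x = x ^ n - (\<Sum>k<n. real (n choose k) * eulerpoly k x) / 2"
  by (subst eulerpoly.simps) (auto intro!: sum.cong)

lemma bernpoly_0 [simp]: "bernpoly 0 x = 1"
  by (subst bernpoly_eq) simp

lemma eulerpoly_0 [simp]: "eulerpoly 0 x = 1"
  by (subst eulerpoly_eq) simp

lemma bernpoly_1: "bernpoly 1 x = x - 1 / 2"
  by (subst bernpoly_eq) simp

lemma bernpoly_recurrence:
  "(\<Sum>k\<le>n. real (Suc n choose k) * bernpoly k x) = real (Suc n) * x ^ n"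
  using bernpoly_eq[of n x]
  unfolding lessThan_Suc_atMost[symmetric] sum.lessThan_Suc by (simp add: field_simps)

lemma eulerpoly_recurrence:
  "eulerpoly n x + (\<Sum>k\<le>n. real (n choose k) * eulerpoly k x) = 2 * x ^ n"
  using eulerpoly_eq[of n x]
  unfolding lessThan_Suc_atMost[symmetric] sum.lessThan_Suc by (simp add: field_simps)

lemma bernpoly_unique:
  assumes "\<And>n. (\<Sum>k\<le>n. real (Suc n choose k) * F k x) = real (Suc n) * x ^ n"
  shows "F n x = bernpoly n x"
proof (induction n rule: less_induct)
  case (less n)
  then have "(\<Sum>k<n. real (Suc n choose k) * F k x) = (\<Sum>k<n. real (Suc n choose k) * bernpoly k x)"
    by simp
  with assms[of n] bernpoly_recurrence[of n x]
  have "real (Suc n) * F n x = real (Suc n) * bernpoly n x"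
    unfolding lessThan_Suc_atMost[symmetric] sum.lessThan_Suc binomial_Suc_n by linarith
  then show ?case by simp
qed

lemma eulerpoly_unique:
  assumes "\<And>n. F n x + (\<Sum>k\<le>n. real (n choose k) * F k x) = 2 * x ^ n"
  shows "F n x = eulerpoly n x"
proof (induction n rule: less_induct)
  case (less n)
  then have "(\<Sum>k<n. real (n choose k) * F k x) = (\<Sum>k<n. real (n choose k) * eulerpoly k x)"
    by simp
  with assms[of n] eulerpoly_recurrence[of n x] show ?case
    unfolding lessThan_Suc_atMost[symmetric] sum.lessThan_Suc by simp
qed

definition appell :: "(nat \<Rightarrow> real \<Rightarrow> real) \<Rightarrow> bool" where
  "appell F \<longleftrightarrow> (\<forall>n t. (F n has_real_derivative real n * F (n - 1) t) (at t))"

lemma appellD: "appell F \<Longrightarrow> (F n has_real_derivative real n * F (n - 1) t) (at t)"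
  unfolding appell_def by blast

lemma sum_lessThan_binomial_times_index:
  "(\<Sum>k<Suc m. real (Suc N choose k) * (real k * f (k - 1)))
     = real (Suc N) * (\<Sum>k<m. real (N choose k) * f k)"
proof -
  have "real (Suc N choose Suc k) * (real (Suc k) * f k) = real (Suc N) * (real (N choose k) * f k)"
    for k
    using arg_cong[OF Suc_times_binomial[of k N], of real] by (simp only: of_nat_mult mult_ac)
  then have "(\<Sum>k<m. real (Suc N choose Suc k) * (real (Suc k) * f k))
      = real (Suc N) * (\<Sum>k<m. real (N choose k) * f k)"
    by (simp only: sum_distrib_left)
  then show ?thesis
    by (subst sum.lessThan_Suc_shift) simp
qed

lemma appell_bernpoly: "appell bernpoly"
  unfolding appell_def
proof (intro allI)
  fix n t
  show "(bernpoly n has_real_derivative real n * bernpoly (n - 1) t) (at t)"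
  proof (induction n arbitrary: t rule: less_induct)
    case (less n)
    have "bernpoly n = (\<lambda>x. ((real n + 1) * x ^ n
        - (\<Sum>k<n. real (Suc n choose k) * bernpoly k x)) / (real n + 1))"
      by (rule ext) (rule bernpoly_eq)
    moreover have "((\<lambda>x. ((real n + 1) * x ^ n
        - (\<Sum>k<n. real (Suc n choose k) * bernpoly k x)) / (real n + 1)) has_real_derivative
        ((real n + 1) * (real n * t ^ (n - 1))
          - (\<Sum>k<n. real (Suc n choose k) * (real k * bernpoly (k - 1) t))) / (real n + 1)) (at t)"
    proof -
      have "((\<lambda>x. \<Sum>k<n. real (Suc n choose k) * bernpoly k x) has_real_derivative
          (\<Sum>k<n. real (Suc n choose k) * (real k * bernpoly (k - 1) t))) (at t)"
        by (intro DERIV_sum DERIV_cmult less) auto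
      then show ?thesis
        by (intro DERIV_cdivide DERIV_diff) (auto intro!: derivative_eq_intros)
    qed
    moreover have "((real n + 1) * (real n * t ^ (n - 1))
          - (\<Sum>k<n. real (Suc n choose k) * (real k * bernpoly (k - 1) t))) / (real n + 1)
        = real n * bernpoly (n - 1) t"
    proof (cases n)
      case (Suc m)
      have "(\<Sum>k<n. real (Suc n choose k) * (real k * bernpoly (k - 1) t))
          = real (Suc n) * (\<Sum>k<m. real (n choose k) * bernpoly k t)"
        unfolding Suc by (rule sum_lessThan_binomial_times_index)
      then show ?thesis
        unfolding Suc diff_Suc_1 by (simp only: bernpoly_eq[of m t]) (simp add: field_simps)
    qed simp
    ultimately show ?case by simp
  qed
qed

lemma appell_eulerpoly: "appell eulerpoly"
  unfolding appell_def
proof (intro allI)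
  fix n t
  show "(eulerpoly n has_real_derivative real n * eulerpoly (n - 1) t) (at t)"
  proof (induction n arbitrary: t rule: less_induct)
    case (less n)
    have "eulerpoly n = (\<lambda>x. x ^ n - (\<Sum>k<n. real (n choose k) * eulerpoly k x) / 2)"
      by (rule ext) (rule eulerpoly_eq)
    moreover have "((\<lambda>x. x ^ n - (\<Sum>k<n. real (n choose k) * eulerpoly k x) / 2)
        has_real_derivative real n * t ^ (n - 1)
          - (\<Sum>k<n. real (n choose k) * (real k * eulerpoly (k - 1) t)) / 2) (at t)"
    proof -
      have "((\<lambda>x. \<Sum>k<n. real (n choose k) * eulerpoly k x) has_real_derivative
          (\<Sum>k<n. real (n choose k) * (real k * eulerpoly (k - 1) t))) (at t)"
        by (intro DERIV_sum DERIV_cmult less) auto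
      then show ?thesis
        by (intro DERIV_diff DERIV_cdivide) (auto intro!: derivative_eq_intros)
    qed
    moreover have "real n * t ^ (n - 1)
          - (\<Sum>k<n. real (n choose k) * (real k * eulerpoly (k - 1) t)) / 2
        = real n * eulerpoly (n - 1) t"
    proof (cases n)
      case (Suc m)
      have "(\<Sum>k<n. real (n choose k) * (real k * eulerpoly (k - 1) t))
          = real n * (\<Sum>k<m. real (m choose k) * eulerpoly k t)"
        unfolding Suc by (rule sum_lessThan_binomial_times_index)
      then show ?thesis
        unfolding Suc diff_Suc_1 by (simp only: eulerpoly_eq[of m t]) (simp add: field_simps)
    qed simp
    ultimately show ?case by simp
  qed
qed


lemma appell_linear_deriv:
  assumes "appell F"
  shows "((\<lambda>w. F n (a * w + x)) has_real_derivative real n * F (n - 1) (a * t + x) * a) (at t)"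
proof -
  have "((\<lambda>w. a * w + x) has_real_derivative a) (at t)"
    by (intro derivative_eq_intros) auto
  from DERIV_chain'[OF this appellD[OF assms]] show ?thesis .
qed

lemma appell_shift:
  assumes "appell F"
  shows "appell (\<lambda>n t. k * F n (t - d))"
  unfolding appell_def
proof (intro allI)
  fix n t
  from DERIV_cmult[OF appell_linear_deriv[OF assms, where n=n and a=1 and x="- d" and t=t], of k]
  show "((\<lambda>t. k * F n (t - d)) has_real_derivative real n * (k * F (n - 1) (t - d))) (at t)"
    by (simp add: algebra_simps)
qed

lemma appell_reflect:
  assumes "appell F"
  shows "appell (\<lambda>n t. (-1) ^ n * F n (1 - t))"
  unfolding appell_def
proof (intro allI)
  fix n t
  from DERIV_cmult[OF appell_linear_deriv[OF assms, where n=n and a="-1" and x=1 and t=t], of "(-1) ^ n"]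
  show "((\<lambda>t. (-1) ^ n * F n (1 - t)) has_real_derivative
      real n * ((-1) ^ (n - 1) * F (n - 1) (1 - t))) (at t)"
    by (cases n) (simp_all add: mult_ac)
qed

lemma binomial_polynomial_deriv:
  "((\<lambda>h. \<Sum>k\<le>Suc n. real (Suc n choose k) * u k * h ^ (Suc n - k)) has_real_derivative
      real (Suc n) * (\<Sum>k\<le>n. real (n choose k) * u k * t ^ (n - k))) (at t)"
proof -
  have absorb: "real (Suc n choose k) * u k * (real (Suc n - k) * t ^ (Suc n - k - 1))
      = real (Suc n) * (real (n choose k) * u k * t ^ (n - k))" if "k \<le> n" for k
  proof -
    have "real (Suc n - k) * real (Suc n choose k) = real (Suc n) * real (n choose k)"
      using arg_cong[OF binomial_absorb_comp[of "Suc n" k], of real]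
      by (simp only: of_nat_mult diff_Suc_1)
    moreover have "Suc n - k - 1 = n - k"
      using that by simp
    ultimately show ?thesis
      by (metis mult.assoc mult.commute)
  qed
  have deriv: "((\<lambda>h. \<Sum>k\<le>Suc n. real (Suc n choose k) * u k * h ^ (Suc n - k)) has_real_derivative
      (\<Sum>k\<le>Suc n. real (Suc n choose k) * u k * (real (Suc n - k) * t ^ (Suc n - k - 1)))) (at t)"
    by (intro DERIV_sum DERIV_cmult) (auto intro!: derivative_eq_intros)
  have "(\<Sum>k\<le>Suc n. real (Suc n choose k) * u k * (real (Suc n - k) * t ^ (Suc n - k - 1)))
      = (\<Sum>k\<le>n. real (Suc n choose k) * u k * (real (Suc n - k) * t ^ (Suc n - k - 1)))"
    by (simp add: sum.atMost_Suc)
  also have "\<dots> = (\<Sum>k\<le>n. real (Suc n) * (real (n choose k) * u k * t ^ (n - k)))"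
    using absorb by (intro sum.cong) auto
  also have "\<dots> = real (Suc n) * (\<Sum>k\<le>n. real (n choose k) * u k * t ^ (n - k))"
    by (simp only: sum_distrib_left)
  finally show ?thesis
    by (rule DERIV_cong[OF deriv])
qed

lemma appell_translate:
  assumes "appell F"
  shows "F n (x + h) = (\<Sum>k\<le>n. real (n choose k) * F k x * h ^ (n - k))"
proof (induction n arbitrary: h)
  case 0
  have "((\<lambda>h. F 0 (x + h)) has_real_derivative 0) (at t)" for t
    using appell_linear_deriv[OF assms, where n=0 and a=1 and x=x and t=t] by (simp add: add.commute)
  then show ?case
    using DERIV_isconst_all[of "\<lambda>h. F 0 (x + h)" h 0] by simp
next
  case (Suc n)
  define D where "D h = F (Suc n) (x + h) - (\<Sum>k\<le>Suc n. real (Suc n choose k) * F k x * h ^ (Suc n - k))"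
    for h
  have "(D has_real_derivative 0) (at t)" for t
  proof -
    have "((\<lambda>h. F (Suc n) (x + h)) has_real_derivative real (Suc n) * F n (x + t)) (at t)"
      using appell_linear_deriv[OF assms, where n="Suc n" and a=1 and x=x and t=t] by (simp add: add.commute)
    from DERIV_diff[OF this binomial_polynomial_deriv[of n "\<lambda>k. F k x" t]] show ?thesis
      unfolding D_def by (simp add: Suc.IH)
  qed
  then have "D h = D 0"
    by (intro DERIV_isconst_all) blast
  moreover have "D 0 = 0"
    by (simp add: D_def sum.atMost_Suc zero_power)
  ultimately show ?case
    unfolding D_def by simp
qed

lemma bernpoly_add_1: "bernpoly (Suc n) (x + 1) - bernpoly (Suc n) x = real (Suc n) * x ^ n"
  using appell_translate[OF appell_bernpoly, of "Suc n" x 1] bernpoly_recurrence[of n x]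
  by (simp add: sum.atMost_Suc)

lemma eulerpoly_add_1: "eulerpoly n (x + 1) + eulerpoly n x = 2 * x ^ n"
  using appell_translate[OF appell_eulerpoly, of n x 1] eulerpoly_recurrence[of n x] by simp

lemma bernpoly_1_eq_0: "n \<noteq> 1 \<Longrightarrow> bernpoly n 1 = bernpoly n 0"
  using bernpoly_add_1[of "n - 1" 0] by (cases n) (simp_all add: zero_power)

lemma eulerpoly_1_eq_0: "n \<noteq> 0 \<Longrightarrow> eulerpoly n 1 = - eulerpoly n 0"
  using eulerpoly_add_1[of n 0] by (simp add: zero_power)

lemma bernpoly_reflect: "bernpoly n (1 - x) = (-1) ^ n * bernpoly n x"
proof -
  define G where "G n t = (-1) ^ n * bernpoly n (1 - t)" for n t
  have "appell G"
    unfolding G_def[abs_def] by (rule appell_reflect[OF appell_bernpoly])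
  have "(\<Sum>k\<le>m. real (Suc m choose k) * G k x) = real (Suc m) * x ^ m" for m
  proof -
    have "G (Suc m) (x + 1) - G (Suc m) x = real (Suc m) * x ^ m"
      using bernpoly_add_1[of m "- x"] by (simp add: G_def algebra_simps power_minus')
    moreover have "G (Suc m) (x + 1) = (\<Sum>k\<le>Suc m. real (Suc m choose k) * G k x)"
      using appell_translate[OF \<open>appell G\<close>, of "Suc m" x 1] by simp
    ultimately show ?thesis
      by (simp add: sum.atMost_Suc)
  qed
  then have "G n x = bernpoly n x"
    by (rule bernpoly_unique)
  then show ?thesis
    unfolding G_def by (cases "even n") auto
qed

lemma eulerpoly_reflect: "eulerpoly n (1 - x) = (-1) ^ n * eulerpoly n x"
proof -
  define G where "G n t = (-1) ^ n * eulerpoly n (1 - t)" for n t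
  have "appell G"
    unfolding G_def[abs_def] by (rule appell_reflect[OF appell_eulerpoly])
  have "G m x + (\<Sum>k\<le>m. real (m choose k) * G k x) = 2 * x ^ m" for m
  proof -
    have "G m (x + 1) + G m x = (-1) ^ m * (eulerpoly m (- x + 1) + eulerpoly m (- x))"
      by (simp add: G_def algebra_simps)
    also have "\<dots> = 2 * ((-1) * (- x)) ^ m"
      unfolding eulerpoly_add_1 power_mult_distrib by simp
    finally have "G m (x + 1) + G m x = 2 * x ^ m"
      by simp
    moreover have "G m (x + 1) = (\<Sum>k\<le>m. real (m choose k) * G k x)"
      using appell_translate[OF \<open>appell G\<close>, of m x 1] by simp
    ultimately show ?thesis
      by simp
  qed
  then have "G n x = eulerpoly n x"
    by (rule eulerpoly_unique)
  then show ?thesis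
    unfolding G_def by (cases "even n") auto
qed

section \<open>Left limits of the Euler and Bernoulli functions\<close>

definition eulerfun_left :: "nat \<Rightarrow> real \<Rightarrow> real" where
  "eulerfun_left n X = (-1) powi (\<lceil>X\<rceil> - 1) * eulerpoly n (X - of_int \<lceil>X\<rceil> + 1)"

definition bernfun_left :: "nat \<Rightarrow> real \<Rightarrow> real" where
  "bernfun_left n X = bernpoly n (X - of_int \<lceil>X\<rceil> + 1)"

lemma ceiling_eq_floor_plus_1: "X \<notin> \<int> \<Longrightarrow> \<lceil>X\<rceil> = \<lfloor>X\<rfloor> + 1"
  by (metis Ints_of_int ceiling_altdef)

lemma eulerfun_left_nonint: "X \<notin> \<int> \<Longrightarrow> eulerfun_left n X = eulerfun n X"
  by (simp add: eulerfun_left_def eulerfun_def ceiling_eq_floor_plus_1)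

lemma bernfun_left_nonint: "X \<notin> \<int> \<Longrightarrow> bernfun_left n X = bernfun n X"
  by (simp add: bernfun_left_def bernfun_def ceiling_eq_floor_plus_1)

lemma eulerfun_uminus: "eulerfun n (- X) = (-1) ^ Suc n * eulerfun_left n X"
proof -
  have "eulerpoly n (of_int \<lceil>X\<rceil> - X) = (-1) ^ n * eulerpoly n (X - of_int \<lceil>X\<rceil> + 1)"
    using eulerpoly_reflect[of n "X - of_int \<lceil>X\<rceil> + 1"] by simp
  then show ?thesis
    by (simp add: eulerfun_def eulerfun_left_def floor_minus power_int_minus_left)
qed

lemma bernfun_uminus: "bernfun n (- X) = (-1) ^ n * bernfun_left n X"
proof -
  have "bernpoly n (of_int \<lceil>X\<rceil> - X) = (-1) ^ n * bernpoly n (X - of_int \<lceil>X\<rceil> + 1)"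
    using bernpoly_reflect[of n "X - of_int \<lceil>X\<rceil> + 1"] by simp
  then show ?thesis
    by (simp add: bernfun_def bernfun_left_def floor_minus)
qed

lemma eulerfun_left_uminus: "eulerfun_left n (- X) = (-1) ^ Suc n * eulerfun n X"
  using eulerfun_uminus[of n "- X"] by (simp flip: power_add)

lemma bernfun_left_uminus: "bernfun_left n (- X) = (-1) ^ n * bernfun n X"
  using bernfun_uminus[of n "- X"] by (simp flip: power_add)

lemma eulerfun_jump:
  "eulerfun n X - eulerfun_left n X = (if n = 0 \<and> X \<in> \<int> then 2 * (-1) powi \<lfloor>X\<rfloor> else 0)"
proof (cases "X \<in> \<int>")
  case True
  then obtain k where "X = of_int k"
    by (auto elim: Ints_cases)
  then show ?thesis
    using eulerpoly_1_eq_0[of n]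
    by (cases "n = 0") (simp_all add: eulerfun_def eulerfun_left_def power_int_minus_left)
qed (simp add: eulerfun_left_nonint)

lemma bernfun_jump: "bernfun n X - bernfun_left n X = (if n = 1 \<and> X \<in> \<int> then -1 else 0)"
proof (cases "X \<in> \<int>")
  case True
  then obtain k where "X = of_int k"
    by (auto elim: Ints_cases)
  then show ?thesis
    using bernpoly_1_eq_0[of n] bernpoly_1
    by (cases "n = 1") (simp_all add: bernfun_def bernfun_left_def)
qed (simp add: bernfun_left_nonint)

lemma eulerfun_add_int: "eulerfun n (X + of_int m) = (-1) powi m * eulerfun n X"
  by (simp add: eulerfun_def power_int_minus_left)

lemma eulerfun_left_add_int: "eulerfun_left n (X + of_int m) = (-1) powi m * eulerfun_left n X"
  by (simp add: eulerfun_left_def power_int_minus_left)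

lemma bernfun_add_int: "bernfun n (X + of_int m) = bernfun n X"
  by (simp add: bernfun_def)

lemma bernfun_left_add_int: "bernfun_left n (X + of_int m) = bernfun_left n X"
  by (simp add: bernfun_left_def)

section \<open>A binomial convolution with vanishing derivative\<close>

definition binom_conv3 ::
    "nat \<Rightarrow> nat \<Rightarrow> real \<Rightarrow> real \<Rightarrow> (nat \<Rightarrow> real) \<Rightarrow> (nat \<Rightarrow> real) \<Rightarrow> (nat \<Rightarrow> real) \<Rightarrow> real" where
  "binom_conv3 P Q r s f g h = (\<Sum>i\<le>P. \<Sum>j\<le>Q.
      real (P choose i) * real (Q choose j) * r ^ (P - i) * s ^ (Q - j) * (f i * g j * h (P + Q - i - j)))"

lemma binom_conv3_diff1:
  "binom_conv3 P Q r s f g h - binom_conv3 P Q r s f' g h = binom_conv3 P Q r s (\<lambda>i. f i - f' i) g h"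
  unfolding binom_conv3_def by (simp add: sum_subtractf[symmetric] algebra_simps)

lemma binom_conv3_diff2:
  "binom_conv3 P Q r s f g h - binom_conv3 P Q r s f g' h = binom_conv3 P Q r s f (\<lambda>j. g j - g' j) h"
  unfolding binom_conv3_def by (simp add: sum_subtractf[symmetric] algebra_simps)

lemma binom_conv3_diff3:
  "binom_conv3 P Q r s f g h - binom_conv3 P Q r s f g h' = binom_conv3 P Q r s f g (\<lambda>l. h l - h' l)"
  unfolding binom_conv3_def by (simp add: sum_subtractf[symmetric] algebra_simps)

lemma binom_conv3_cmult13:
  "binom_conv3 P Q r s (\<lambda>i. k1 * f i) g (\<lambda>l. k2 * h l) = k1 * k2 * binom_conv3 P Q r s f g h"
  unfolding binom_conv3_def by (simp add: sum_distrib_left algebra_simps)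

lemma binom_conv3_delta1:
  "binom_conv3 P Q r s (\<lambda>i. if i = 0 then d else 0) g h
    = d * (\<Sum>j\<le>Q. real (Q choose j) * r ^ P * s ^ (Q - j) * (g j * h (P + Q - j)))"
proof -
  have "binom_conv3 P Q r s (\<lambda>i. if i = 0 then d else 0) g h
      = (\<Sum>i\<le>P. if i = 0 then (\<Sum>j\<le>Q. d * (real (Q choose j) * r ^ P * s ^ (Q - j) * (g j * h (P + Q - j)))) else 0)"
    unfolding binom_conv3_def by (intro sum.cong refl) (auto intro!: sum.cong)
  then show ?thesis
    by (simp add: sum_distrib_left)
qed

lemma binom_conv3_delta2:
  assumes "Q \<ge> 1"
  shows "binom_conv3 P Q r s f (\<lambda>j. if j = 1 then d else 0) h
    = d * (\<Sum>i\<le>P. real (P choose i) * real Q * r ^ (P - i) * s ^ (Q - 1) * (f i * h (P + Q - i - 1)))"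
proof -
  have "binom_conv3 P Q r s f (\<lambda>j. if j = 1 then d else 0) h
      = (\<Sum>i\<le>P. \<Sum>j\<le>Q. if j = 1 then d * (real (P choose i) * real Q * r ^ (P - i) * s ^ (Q - 1) * (f i * h (P + Q - i - 1))) else 0)"
    unfolding binom_conv3_def by (intro sum.cong refl) auto
  then show ?thesis
    using assms by (simp add: sum_distrib_left)
qed

lemma binom_conv3_delta3: "binom_conv3 P Q r s f g (\<lambda>l. if l = 0 then d else 0) = f P * g Q * d"
proof -
  have "binom_conv3 P Q r s f g (\<lambda>l. if l = 0 then d else 0)
      = (\<Sum>i\<le>P. \<Sum>j\<le>Q. if j = Q then (if i = P then f P * g Q * d else 0) else 0)"
    unfolding binom_conv3_def by (intro sum.cong refl) auto
  then show ?thesis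
    by simp
qed

lemma sum_binomial_times_index:
  "(\<Sum>i\<le>Suc N. real (Suc N choose i) * r ^ (Suc N - i) * (real i * u i))
     = real (Suc N) * (\<Sum>i\<le>N. real (N choose i) * r ^ (N - i) * u (Suc i))"
proof -
  have "real (Suc N choose Suc i) * r ^ (N - i) * (real (Suc i) * u (Suc i))
      = real (Suc N) * (real (N choose i) * r ^ (N - i) * u (Suc i))" for i
  proof -
    have "real (Suc i) * real (Suc N choose Suc i) = real (Suc N) * real (N choose i)"
      using arg_cong[OF Suc_times_binomial[of i N], of real] by (simp only: of_nat_mult)
    then show ?thesis
      by (metis mult.assoc mult.commute)
  qed
  then have "(\<Sum>i\<le>N. real (Suc N choose Suc i) * r ^ (N - i) * (real (Suc i) * u (Suc i)))
      = real (Suc N) * (\<Sum>i\<le>N. real (N choose i) * r ^ (N - i) * u (Suc i))"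
    by (simp only: sum_distrib_left)
  then show ?thesis
    by (subst sum.atMost_Suc_shift) simp
qed

lemma sum_binomial_times_coindex:
  "(\<Sum>i\<le>Suc N. real (Suc N choose i) * r ^ (Suc N - i) * (real (Suc N - i) * u i))
     = real (Suc N) * r * (\<Sum>i\<le>N. real (N choose i) * r ^ (N - i) * u i)"
proof -
  have absorb: "real (Suc N choose i) * r ^ (Suc N - i) * (real (Suc N - i) * u i)
      = real (Suc N) * r * (real (N choose i) * r ^ (N - i) * u i)" if "i \<le> N" for i
  proof -
    have "real (Suc N - i) * real (Suc N choose i) = real (Suc N) * real (N choose i)"
      using arg_cong[OF binomial_absorb_comp[of "Suc N" i], of real]
      by (simp only: of_nat_mult diff_Suc_1)
    moreover have "r ^ (Suc N - i) = r * r ^ (N - i)"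
      using that by (simp add: Suc_diff_le)
    ultimately show ?thesis
      by (metis mult.assoc mult.commute)
  qed
  have "(\<Sum>i\<le>Suc N. real (Suc N choose i) * r ^ (Suc N - i) * (real (Suc N - i) * u i))
      = (\<Sum>i\<le>N. real (Suc N choose i) * r ^ (Suc N - i) * (real (Suc N - i) * u i))"
    by (simp add: sum.atMost_Suc)
  also have "\<dots> = (\<Sum>i\<le>N. real (Suc N) * r * (real (N choose i) * r ^ (N - i) * u i))"
    using absorb by (intro sum.cong) auto
  finally show ?thesis
    by (simp only: sum_distrib_left)
qed

text \<open>Differentiating \<open>f\<close> produces the factor \<open>a\<close>, differentiating \<open>g\<close> the factor \<open>c r\<close>,
  and the two contributions cancel.\<close>

lemma binomial_sum_cancel:
  assumes "a + c * r = 0"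
  shows "(\<Sum>i\<le>P. real (P choose i) * r ^ (P - i) *
      (real i * a * f (i - 1) * g (P - i) + real (P - i) * c * f i * g (P - i - 1))) = 0"
proof (cases P)
  case (Suc N)
  define S where "S = (\<Sum>i\<le>N. real (N choose i) * r ^ (N - i) * (f i * g (N - i)))"
  have "(\<Sum>i\<le>P. real (P choose i) * r ^ (P - i) *
      (real i * a * f (i - 1) * g (P - i) + real (P - i) * c * f i * g (P - i - 1)))
    = (\<Sum>i\<le>P. real (P choose i) * r ^ (P - i) * (real i * (a * f (i - 1) * g (P - i))))
      + (\<Sum>i\<le>P. real (P choose i) * r ^ (P - i) * (real (P - i) * (c * f i * g (N - i))))"
    unfolding sum.distrib[symmetric] by (intro sum.cong refl) (simp add: Suc algebra_simps)
  also have "\<dots> = real P * (a * S) + real P * r * (c * S)"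
    unfolding Suc sum_binomial_times_index sum_binomial_times_coindex S_def
    by (simp add: sum_distrib_left mult_ac)
  also have "\<dots> = real P * (a + c * r) * S"
    by (simp add: algebra_simps)
  finally show ?thesis
    using assms by simp
qed simp

lemma real_add_times_pred:
  "real (m + n) * h (m + n - 1) = real m * h (m - 1 + n) + real n * h (m + (n - 1))"
  by (cases m; cases n) (simp_all add: algebra_simps)

lemma binomial_double_sum_cancel:
  assumes r: "a + c * r = 0" and s: "b + c * s = 0"
  shows "(\<Sum>i\<le>P. \<Sum>j\<le>Q. real (P choose i) * real (Q choose j) * r ^ (P - i) * s ^ (Q - j) *
      (real i * a * f (i - 1) * g j * h (P + Q - i - j)
       + real j * b * f i * g (j - 1) * h (P + Q - i - j)
       + c * f i * g j * (real (P + Q - i - j) * h (P + Q - i - j - 1)))) = 0"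
proof -
  define \<alpha> where "\<alpha> i j = real (P choose i) * r ^ (P - i) *
      (real i * a * f (i - 1) * (g j * h (P - i + (Q - j)))
       + real (P - i) * c * f i * (g j * h (P - i - 1 + (Q - j))))" for i j
  define \<beta> where "\<beta> i j = real (Q choose j) * s ^ (Q - j) *
      (real j * b * g (j - 1) * (f i * h (P - i + (Q - j)))
       + real (Q - j) * c * g j * (f i * h (P - i + (Q - j - 1))))" for i j
  have \<alpha>_cancel: "(\<Sum>i\<le>P. \<alpha> i j) = 0" for j
    unfolding \<alpha>_def by (rule binomial_sum_cancel[OF r])
  have \<beta>_cancel: "(\<Sum>j\<le>Q. \<beta> i j) = 0" for i
    unfolding \<beta>_def by (rule binomial_sum_cancel[OF s])
  have "real (P choose i) * real (Q choose j) * r ^ (P - i) * s ^ (Q - j) *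
      (real i * a * f (i - 1) * g j * h (P + Q - i - j)
       + real j * b * f i * g (j - 1) * h (P + Q - i - j)
       + c * f i * g j * (real (P + Q - i - j) * h (P + Q - i - j - 1)))
    = real (Q choose j) * s ^ (Q - j) * \<alpha> i j + real (P choose i) * r ^ (P - i) * \<beta> i j"
    if "i \<le> P" "j \<le> Q" for i j
  proof -
    have "P + Q - i - j = (P - i) + (Q - j)"
      using that by simp
    then show ?thesis
      unfolding \<alpha>_def \<beta>_def
      by (simp only:) (subst real_add_times_pred, simp add: algebra_simps)
  qed
  then have "(\<Sum>i\<le>P. \<Sum>j\<le>Q. real (P choose i) * real (Q choose j) * r ^ (P - i) * s ^ (Q - j) *
      (real i * a * f (i - 1) * g j * h (P + Q - i - j)
       + real j * b * f i * g (j - 1) * h (P + Q - i - j)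
       + c * f i * g j * (real (P + Q - i - j) * h (P + Q - i - j - 1))))
    = (\<Sum>i\<le>P. \<Sum>j\<le>Q. real (Q choose j) * s ^ (Q - j) * \<alpha> i j)
      + (\<Sum>i\<le>P. \<Sum>j\<le>Q. real (P choose i) * r ^ (P - i) * \<beta> i j)"
    by (simp add: sum.distrib)
  also have "\<dots> = (\<Sum>j\<le>Q. real (Q choose j) * s ^ (Q - j) * (\<Sum>i\<le>P. \<alpha> i j))
      + (\<Sum>i\<le>P. real (P choose i) * r ^ (P - i) * (\<Sum>j\<le>Q. \<beta> i j))"
    by (simp only: sum_distrib_left sum.swap[of _ "{..P}"])
  finally show ?thesis
    by (simp add: \<alpha>_cancel \<beta>_cancel)
qed

lemma binom_conv3_deriv_zero:
  assumes F: "appell F" and G: "appell G" and H: "appell H"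
    and r: "a + c * r = 0" and s: "b + c * s = 0"
  shows "((\<lambda>w. binom_conv3 P Q r s (\<lambda>i. F i (a * w + x)) (\<lambda>j. G j (b * w + y)) (\<lambda>l. H l (c * w + z)))
      has_real_derivative 0) (at t)"
proof -
  define K where "K i j = real (P choose i) * real (Q choose j) * r ^ (P - i) * s ^ (Q - j)" for i j
  have "((\<lambda>w. K i j * (F i (a * w + x) * G j (b * w + y) * H l (c * w + z))) has_real_derivative
      K i j * (real i * a * F (i - 1) (a * t + x) * G j (b * t + y) * H l (c * t + z)
        + real j * b * F i (a * t + x) * G (j - 1) (b * t + y) * H l (c * t + z)
        + c * F i (a * t + x) * G j (b * t + y) * (real l * H (l - 1) (c * t + z)))) (at t)"
    for i j l
    using DERIV_cmult[OF DERIV_mult[OF DERIV_mult[OF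
        appell_linear_deriv[OF F, where n=i and a=a and x=x and t=t]
        appell_linear_deriv[OF G, where n=j and a=b and x=y and t=t]]
        appell_linear_deriv[OF H, where n=l and a=c and x=z and t=t]], of "K i j"]
    by (simp add: algebra_simps)
  then have "((\<lambda>w. \<Sum>i\<le>P. \<Sum>j\<le>Q. K i j * (F i (a * w + x) * G j (b * w + y) * H (P + Q - i - j) (c * w + z)))
      has_real_derivative (\<Sum>i\<le>P. \<Sum>j\<le>Q. K i j *
        (real i * a * F (i - 1) (a * t + x) * G j (b * t + y) * H (P + Q - i - j) (c * t + z)
        + real j * b * F i (a * t + x) * G (j - 1) (b * t + y) * H (P + Q - i - j) (c * t + z)
        + c * F i (a * t + x) * G j (b * t + y) *
            (real (P + Q - i - j) * H (P + Q - i - j - 1) (c * t + z))))) (at t)"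
    by (intro DERIV_sum)
  also have "(\<Sum>i\<le>P. \<Sum>j\<le>Q. K i j *
        (real i * a * F (i - 1) (a * t + x) * G j (b * t + y) * H (P + Q - i - j) (c * t + z)
        + real j * b * F i (a * t + x) * G (j - 1) (b * t + y) * H (P + Q - i - j) (c * t + z)
        + c * F i (a * t + x) * G j (b * t + y) *
            (real (P + Q - i - j) * H (P + Q - i - j - 1) (c * t + z)))) = 0"
    unfolding K_def
    by (rule binomial_double_sum_cancel[OF r s, where f="\<lambda>i. F i (a * t + x)"
          and g="\<lambda>j. G j (b * t + y)" and h="\<lambda>l. H l (c * t + z)"])
  finally show ?thesis
    unfolding binom_conv3_def K_def .
qed

lemma binom_conv3_const:
  assumes "appell F" "appell G" "appell H" "a + c * r = 0" "b + c * s = 0"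
  shows "binom_conv3 P Q r s (\<lambda>i. F i (a * w + x)) (\<lambda>j. G j (b * w + y)) (\<lambda>l. H l (c * w + z))
       = binom_conv3 P Q r s (\<lambda>i. F i (a * w' + x)) (\<lambda>j. G j (b * w' + y)) (\<lambda>l. H l (c * w' + z))"
  using binom_conv3_deriv_zero[OF assms] by (intro DERIV_isconst_all) blast

section \<open>Lattice points on a line and periodic sums\<close>

lemma sum_jumps_eq_total_change:
  fixes f g :: "real \<Rightarrow> real" and K :: "real set"
  assumes "finite K" and "u < v"
    and "\<And>s t. u \<le> s \<Longrightarrow> s < t \<Longrightarrow> t \<le> v \<Longrightarrow> {s<..<t} \<inter> K = {} \<Longrightarrow> f s = g t"
  shows "(\<Sum>k\<in>K \<inter> {u<..<v}. f k - g k) = g v - f u"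
  using assms(2,3)
proof (induction "card (K \<inter> {u<..<v})" arbitrary: v rule: less_induct)
  case less
  show ?case
  proof (cases "K \<inter> {u<..<v} = {}")
    case True
    then show ?thesis
      using less.prems by (auto simp: Int_commute)
  next
    case False
    have fin: "finite (K \<inter> {u<..<v})"
      using assms(1) by simp
    define m where "m = Max (K \<inter> {u<..<v})"
    have m: "m \<in> K \<inter> {u<..<v}"
      unfolding m_def using Max_in[OF fin False] .
    have m_max: "k \<le> m" if "k \<in> K \<inter> {u<..<v}" for k
      unfolding m_def using Max_ge[OF fin that] .
    have split: "K \<inter> {u<..<v} = insert m (K \<inter> {u<..<m})"
      using m m_max by force
    have "card (K \<inter> {u<..<m}) < card (K \<inter> {u<..<v})"
      unfolding split using assms(1) by (simp add: card_insert_disjoint)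
    then have "(\<Sum>k\<in>K \<inter> {u<..<m}. f k - g k) = g m - f u"
      using less.prems m by (intro less.hyps) auto
    moreover have "f m = g v"
    proof -
      have "{m<..<v} \<inter> K = {}"
        using m_max m by force
      then show ?thesis
        using less.prems m by auto
    qed
    ultimately show ?thesis
      unfolding split using assms(1) by (simp add: sum.insert)
  qed
qed

lemma lattice_points_finite:
  fixes m u v \<beta> :: real
  assumes "m > 0"
  shows "finite {w. u < w \<and> w < v \<and> m * w + \<beta> \<in> \<int>}"
proof (rule finite_subset)
  show "{w. u < w \<and> w < v \<and> m * w + \<beta> \<in> \<int>}
      \<subseteq> (\<lambda>k. (of_int k - \<beta>) / m) ` {\<lfloor>m * u + \<beta>\<rfloor>..\<lceil>m * v + \<beta>\<rceil>}"
  proof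
    fix w
    assume w: "w \<in> {w. u < w \<and> w < v \<and> m * w + \<beta> \<in> \<int>}"
    then obtain k where k: "m * w + \<beta> = of_int k"
      by (auto elim: Ints_cases)
    have "m * u < m * w" "m * w < m * v"
      using w assms by auto
    then have "\<lfloor>m * u + \<beta>\<rfloor> \<le> k" "k \<le> \<lceil>m * v + \<beta>\<rceil>"
      using k by (simp_all add: floor_le_iff le_ceiling_iff)
    moreover have "w = (of_int k - \<beta>) / m"
      using k assms by (auto simp: field_simps)
    ultimately show "w \<in> (\<lambda>k. (of_int k - \<beta>) / m) ` {\<lfloor>m * u + \<beta>\<rfloor>..\<lceil>m * v + \<beta>\<rceil>}"
      by auto
  qed
qed simp

lemma ceiling_minus_1_eq_floor_if_no_lattice_point:
  fixes m \<beta> s t :: real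
  assumes m: "m > 0" and "s < t" and no_lattice: "\<And>w. s < w \<Longrightarrow> w < t \<Longrightarrow> m * w + \<beta> \<notin> \<int>"
  shows "\<lceil>m * t + \<beta>\<rceil> - 1 = \<lfloor>m * s + \<beta>\<rfloor>"
proof -
  define n where "n = \<lfloor>m * s + \<beta>\<rfloor>"
  have "m * s < m * t"
    using assms by simp
  then have lower: "of_int n < m * t + \<beta>"
    unfolding n_def using of_int_floor_le[of "m * s + \<beta>"] by linarith
  have upper: "m * t + \<beta> \<le> of_int n + 1"
  proof (rule ccontr)
    assume "\<not> ?thesis"
    define w where "w = (of_int n + 1 - \<beta>) / m"
    have w: "m * w + \<beta> = of_int (n + 1)"
      unfolding w_def using m by (simp add: field_simps)
    have "m * s + \<beta> < of_int n + 1"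
      unfolding n_def by (rule real_of_int_floor_add_one_gt)
    with \<open>\<not> ?thesis\<close> w have "m * s < m * w" "m * w < m * t"
      by auto
    with m have "s < w" "w < t"
      by auto
    with no_lattice w show False
      by (metis Ints_of_int)
  qed
  from lower upper have "\<lceil>m * t + \<beta>\<rceil> = n + 1"
    by (subst ceiling_eq_iff) simp
  then show ?thesis
    unfolding n_def by simp
qed

lemma between_iff_floor_window:
  fixes X :: real and k m :: int
  assumes "X \<notin> \<int>"
  shows "X < of_int k \<and> of_int k < X + of_int m \<longleftrightarrow> k \<in> {\<lfloor>X\<rfloor> + 1..<\<lfloor>X\<rfloor> + 1 + m}"
proof -
  have "of_int (k - m) \<noteq> X"
    using assms by (metis Ints_of_int)
  then have "of_int (k - m) < X \<longleftrightarrow> k - m \<le> \<lfloor>X\<rfloor>"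
    using le_floor_iff[of "k - m" X] by linarith
  moreover have "X < of_int k \<longleftrightarrow> \<lfloor>X\<rfloor> + 1 \<le> k"
    using floor_less_iff[of X k] by linarith
  ultimately show ?thesis
    by auto
qed

lemma lattice_points_window:
  fixes \<beta> u :: real and m :: int
  assumes m: "m > 0" and nonint: "of_int m * u + \<beta> \<notin> \<int>"
  shows "{w. u < w \<and> w < u + 1 \<and> of_int m * w + \<beta> \<in> \<int>}
       = (\<lambda>k. (of_int k - \<beta>) / of_int m) ` {\<lfloor>of_int m * u + \<beta>\<rfloor> + 1..<\<lfloor>of_int m * u + \<beta>\<rfloor> + 1 + m}"
    (is "?L = ?R")
proof -
  define X where "X = of_int m * u + \<beta>"
  have mr: "(of_int m :: real) > 0"
    using m by simp
  have window: "u < w \<and> w < u + 1 \<longleftrightarrow> X < of_int m * w + \<beta> \<and> of_int m * w + \<beta> < X + of_int m" for w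
    using mult_less_cancel_left_pos[OF mr, of u w] mult_less_cancel_left_pos[OF mr, of w "u + 1"]
    unfolding X_def by (simp add: distrib_left)
  note between = between_iff_floor_window[OF nonint[folded X_def]]
  show ?thesis
  proof (intro set_eqI iffI)
    fix w
    assume "w \<in> ?L"
    then obtain k where k: "of_int m * w + \<beta> = of_int k" and "u < w" "w < u + 1"
      by (auto elim: Ints_cases)
    then have "k \<in> {\<lfloor>X\<rfloor> + 1..<\<lfloor>X\<rfloor> + 1 + m}"
      using window[of w] between[of k] by simp
    moreover have "w = (of_int k - \<beta>) / of_int m"
      using k mr by (simp add: field_simps)
    ultimately show "w \<in> ?R"
      unfolding X_def by blast
  next
    fix w
    assume "w \<in> ?R"
    then obtain k where "k \<in> {\<lfloor>X\<rfloor> + 1..<\<lfloor>X\<rfloor> + 1 + m}" and w: "w = (of_int k - \<beta>) / of_int m"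
      unfolding X_def by blast
    moreover have "of_int m * w + \<beta> = of_int k"
      using w mr by simp
    ultimately show "w \<in> ?L"
      using window[of w] between[of k] by simp
  qed
qed

lemma sum_periodic_window:
  fixes g :: "int \<Rightarrow> real" and m :: int
  assumes m: "m > 0" and per: "\<And>k. g (k + m) = g k"
  shows "(\<Sum>k\<in>{n..<n + m}. g k) = (\<Sum>k\<in>{0..<m}. g k)"
proof -
  have shift: "(\<Sum>k\<in>{n + 1..<n + 1 + m}. g k) = (\<Sum>k\<in>{n..<n + m}. g k)" for n
  proof -
    have "{n..<n + m} = insert n {n + 1..<n + m}" "{n + 1..<n + 1 + m} = insert (n + m) {n + 1..<n + m}"
      using m by auto
    then show ?thesis
      using per[of n] by simp
  qed
  show ?thesis
  proof (induction n rule: int_induct[where k=0])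
    case (step1 i)
    then show ?case
      using shift[of i] by simp
  next
    case (step2 i)
    then show ?case
      using shift[of "i - 1"] by simp
  qed simp
qed

lemma sum_lattice_points_periodic:
  fixes m :: int and f :: "real \<Rightarrow> real"
  assumes m: "m > 0" and nonint: "of_int m * u + \<beta> \<notin> \<int>" and per: "\<And>w. f (w + 1) = f w"
  shows "(\<Sum>w | u < w \<and> w < u + 1 \<and> of_int m * w + \<beta> \<in> \<int>. f w)
    = (\<Sum>\<mu><nat m. f ((real \<mu> - \<beta>) / of_int m))"
proof -
  define n where "n = \<lfloor>of_int m * u + \<beta>\<rfloor> + 1"
  define g where "g k = f ((of_int k - \<beta>) / of_int m)" for k :: int
  have mr: "(of_int m :: real) \<noteq> 0"
    using m by simp
  have "inj_on (\<lambda>k::int. (of_int k - \<beta>) / of_int m) {n..<n + m}"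
    by (rule inj_onI) (use mr in \<open>simp add: field_simps\<close>)
  then have "(\<Sum>w | u < w \<and> w < u + 1 \<and> of_int m * w + \<beta> \<in> \<int>. f w) = (\<Sum>k\<in>{n..<n + m}. g k)"
    unfolding lattice_points_window[OF m nonint] n_def g_def by (simp add: sum.reindex)
  also have "\<dots> = (\<Sum>k\<in>{0..<m}. g k)"
  proof (rule sum_periodic_window[OF m])
    fix k
    have "(of_int (k + m) - \<beta>) / of_int m = (of_int k - \<beta>) / of_int m + 1"
      using mr by (simp add: field_simps)
    then show "g (k + m) = g k"
      unfolding g_def using per by simp
  qed
  also have "\<dots> = (\<Sum>\<mu><nat m. g (int \<mu>))"
    by (rule sum.reindex_bij_witness[of _ int nat]) auto
  finally show ?thesis
    unfolding g_def by simp
qed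

lemma sum_lattice_points_periodic_reflect:
  fixes m :: int and f :: "real \<Rightarrow> real"
  assumes m: "m > 0" and nonint: "of_int m * u + \<beta> \<notin> \<int>" and per: "\<And>w. f (w + 1) = f w"
  shows "(\<Sum>w | u < w \<and> w < u + 1 \<and> of_int m * w + \<beta> \<in> \<int>. f w)
    = (\<Sum>\<mu><nat m. f (- ((real \<mu> + \<beta>) / of_int m)))"
proof -
  have "- (of_int m * w) - \<beta> \<in> \<int> \<longleftrightarrow> of_int m * w + \<beta> \<in> \<int>"
    and "\<beta> - of_int m * w \<in> \<int> \<longleftrightarrow> of_int m * w - \<beta> \<in> \<int>" for w
    by (metis minus_add_distrib minus_in_Ints_iff diff_conv_add_uminus,
        metis minus_diff_eq minus_in_Ints_iff)
  then have "(\<Sum>w | u < w \<and> w < u + 1 \<and> of_int m * w + \<beta> \<in> \<int>. f w)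
      = (\<Sum>w | - u - 1 < w \<and> w < - u - 1 + 1 \<and> of_int m * w + - \<beta> \<in> \<int>. f (- w))"
    by (intro sum.reindex_bij_witness[of _ uminus uminus]) auto
  also have "\<dots> = (\<Sum>\<mu><nat m. f (- ((real \<mu> - - \<beta>) / of_int m)))"
  proof (rule sum_lattice_points_periodic[OF m, where f="\<lambda>w. f (- w)"])
    have "of_int m * (- u - 1) + - \<beta> = - ((of_int m * u + \<beta>) + of_int m)"
      by (simp add: algebra_simps)
    then show "of_int m * (- u - 1) + - \<beta> \<notin> \<int>"
      using nonint by (simp only: minus_in_Ints_iff add_in_Ints_iff_right Ints_of_int not_False_eq_True)
    show "f (- (w + 1)) = f (- w)" for w
      using per[of "- w - 1"] by simp
  qed
  finally show ?thesis
    by simp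
qed

lemma minus_power_sign:
  fixes u v t :: real
  shows "(- u) ^ m * (- v) ^ n * (-1) ^ (m + n + 1) * t = - (u ^ m * v ^ n * t)"
  by (simp add: power_minus' power_add algebra_simps)

lemma powi_rescale:
  fixes A B C :: real
  assumes "A \<noteq> 0" "B \<noteq> 0" "C \<noteq> 0"
  shows "A powi (- int m) * B powi (1 - int n) * ((A / C) ^ k * (B / C) ^ l)
    = A powi (int k - int m) * B powi (1 + int l - int n) * C powi (- int k - int l)"
  using assms by (simp add: power_int_diff power_int_add power_int_minus field_simps power_divide)

lemma powi_rescale_S4_coeff:
  fixes A B C :: real
  assumes "A \<noteq> 0" "B \<noteq> 0" "C \<noteq> 0" and "i \<le> P" "Q \<ge> 1"
  shows "A powi (- int P) * B powi (1 - int Q) * ((A / C) ^ (P - i) * (B / C) ^ (Q - 1))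
    = A powi (1 - int (Suc i)) * C powi (1 + int (Suc i) - int (Suc P) - int Q)"
proof -
  have "int (P - i) - int P = 1 - int (Suc i)" "1 + int (Q - 1) - int Q = 0"
    "- int (P - i) - int (Q - 1) = 1 + int (Suc i) - int (Suc P) - int Q"
    using assms(4,5) by simp_all
  then show ?thesis
    by (simp only: powi_rescale[OF assms(1-3)] power_int_0_right mult_1_right)
qed

lemma powi_rescale_S35_coeff:
  fixes A B C :: real
  assumes "A \<noteq> 0" "B \<noteq> 0" "C \<noteq> 0" and "h \<le> Q"
  shows "A powi (- int P) * B powi (1 - int Q) * ((A / C) ^ P * (B / C) ^ (Q - h))
    = B powi (1 - int h) * C powi (1 + int h - int (Suc P) - int Q)"
proof -
  have "int P - int P = 0" "1 + int (Q - h) - int Q = 1 - int h"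
    "- int P - int (Q - h) = 1 + int h - int (Suc P) - int Q"
    using assms(4) by simp_all
  then show ?thesis
    by (simp only: powi_rescale[OF assms(1-3)] power_int_0_right mult_1_left)
qed

section \<open>The jumps of the kernel\<close>

locale reciprocity_setting =
  fixes a b c :: int and x y z :: real and P Q :: nat
  assumes a_pos: "a > 0" and b_pos: "b > 0" and c_pos: "c > 0"
    and even_a_plus_c: "even (a + c)" and Q_pos: "Q \<ge> 1"
begin

definition lin_a :: "real \<Rightarrow> real" where "lin_a w = of_int a * w + x"
definition lin_b :: "real \<Rightarrow> real" where "lin_b w = of_int b * w + y"
definition lin_c :: "real \<Rightarrow> real" where "lin_c w = of_int c * w - z"

definition eb_kernel :: "real \<Rightarrow> real" where
  "eb_kernel w = binom_conv3 P Q (- of_int a / of_int c) (- of_int b / of_int c)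
     (\<lambda>i. eulerfun i (lin_a w)) (\<lambda>j. bernfun j (lin_b w)) (\<lambda>l. eulerfun l (lin_c w))"

definition eb_kernel_left :: "real \<Rightarrow> real" where
  "eb_kernel_left w = binom_conv3 P Q (- of_int a / of_int c) (- of_int b / of_int c)
     (\<lambda>i. eulerfun_left i (lin_a w)) (\<lambda>j. bernfun_left j (lin_b w)) (\<lambda>l. eulerfun_left l (lin_c w))"

lemma lin_add_1:
  "lin_a (w + 1) = lin_a w + of_int a" "lin_b (w + 1) = lin_b w + of_int b"
  "lin_c (w + 1) = lin_c w + of_int c"
  by (simp_all add: lin_a_def lin_b_def lin_c_def algebra_simps)

lemma even_c_iff_even_a: "even c \<longleftrightarrow> even a"
  using even_a_plus_c by auto

lemma eb_kernel_add_1: "eb_kernel (w + 1) = eb_kernel w"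
  unfolding eb_kernel_def lin_add_1 eulerfun_add_int bernfun_add_int binom_conv3_cmult13
  by (cases "even a") (simp_all add: power_int_minus_left even_c_iff_even_a)

lemma eb_kernel_left_nonint:
  "lin_a w \<notin> \<int> \<Longrightarrow> lin_b w \<notin> \<int> \<Longrightarrow> lin_c w \<notin> \<int> \<Longrightarrow> eb_kernel_left w = eb_kernel w"
  by (simp add: eb_kernel_def eb_kernel_left_def eulerfun_left_nonint bernfun_left_nonint)

text \<open>Between lattice points every Euler and Bernoulli function involved is one shifted
  polynomial, which is again an Appell sequence, so the kernel is constant there.\<close>

lemma eb_kernel_eq_left_if_no_lattice_point:
  assumes "s < t"
    and no_lattice: "\<And>w. s < w \<Longrightarrow> w < t \<Longrightarrow> lin_a w \<notin> \<int> \<and> lin_b w \<notin> \<int> \<and> lin_c w \<notin> \<int>"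
  shows "eb_kernel s = eb_kernel_left t"
proof -
  define \<alpha> where "\<alpha> = \<lfloor>lin_a s\<rfloor>"
  define \<beta> where "\<beta> = \<lfloor>lin_b s\<rfloor>"
  define \<gamma> where "\<gamma> = \<lfloor>lin_c s\<rfloor>"
  have "\<lceil>lin_a t\<rceil> - 1 = \<alpha>"
    unfolding \<alpha>_def lin_a_def using a_pos \<open>s < t\<close> no_lattice
    by (intro ceiling_minus_1_eq_floor_if_no_lattice_point) (auto simp: lin_a_def)
  moreover have "\<lceil>lin_b t\<rceil> - 1 = \<beta>"
    unfolding \<beta>_def lin_b_def using b_pos \<open>s < t\<close> no_lattice
    by (intro ceiling_minus_1_eq_floor_if_no_lattice_point) (auto simp: lin_b_def)
  moreover have "\<lceil>lin_c t\<rceil> - 1 = \<gamma>"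
    using ceiling_minus_1_eq_floor_if_no_lattice_point[of "of_int c" s t "- z"] c_pos \<open>s < t\<close> no_lattice
    unfolding \<gamma>_def lin_c_def by auto
  ultimately have left:
    "eulerfun_left i (lin_a t) = (-1) powi \<alpha> * eulerpoly i (lin_a t - of_int \<alpha>)"
    "bernfun_left j (lin_b t) = 1 * bernpoly j (lin_b t - of_int \<beta>)"
    "eulerfun_left l (lin_c t) = (-1) powi \<gamma> * eulerpoly l (lin_c t - of_int \<gamma>)" for i j l
    by (auto simp: eulerfun_left_def bernfun_left_def algebra_simps)
  have right:
    "eulerfun i (lin_a s) = (-1) powi \<alpha> * eulerpoly i (lin_a s - of_int \<alpha>)"
    "bernfun j (lin_b s) = 1 * bernpoly j (lin_b s - of_int \<beta>)"
    "eulerfun l (lin_c s) = (-1) powi \<gamma> * eulerpoly l (lin_c s - of_int \<gamma>)" for i j l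
    by (simp_all add: eulerfun_def bernfun_def \<alpha>_def \<beta>_def \<gamma>_def)
  have "of_int a + of_int c * (- of_int a / of_int c) = (0::real)"
    and "of_int b + of_int c * (- of_int b / of_int c) = (0::real)"
    using c_pos by simp_all
  from binom_conv3_const[OF appell_shift[OF appell_eulerpoly, of "(-1) powi \<alpha>" "of_int \<alpha>"]
      appell_shift[OF appell_bernpoly, of 1 "of_int \<beta>"]
      appell_shift[OF appell_eulerpoly, of "(-1) powi \<gamma>" "of_int \<gamma>"] this,
      where P=P and Q=Q and w=s and w'=t and x=x and y=y and z="- z"]
  show ?thesis
    unfolding eb_kernel_def eb_kernel_left_def left right
    by (simp add: lin_a_def lin_b_def lin_c_def)
qed

text \<open>The contributions of the three lines to the jump of the kernel at \<open>w\<close>: at an integer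
  only \<open>E\<^sub>0\<close> and \<open>B\<^sub>1\<close> differ from their left limits.\<close>

definition jump_c :: "real \<Rightarrow> real" where
  "jump_c w = eulerfun P (lin_a w) * bernfun Q (lin_b w) * (eulerfun 0 (lin_c w) - eulerfun_left 0 (lin_c w))"

definition jump_b :: "real \<Rightarrow> real" where
  "jump_b w = (bernfun 1 (lin_b w) - bernfun_left 1 (lin_b w)) *
     (\<Sum>i\<le>P. real (P choose i) * real Q * (- of_int a / of_int c) ^ (P - i) * (- of_int b / of_int c) ^ (Q - 1)
        * (eulerfun i (lin_a w) * eulerfun_left (P + Q - i - 1) (lin_c w)))"

definition jump_a :: "real \<Rightarrow> real" where
  "jump_a w = (eulerfun 0 (lin_a w) - eulerfun_left 0 (lin_a w)) *
     (\<Sum>j\<le>Q. real (Q choose j) * (- of_int a / of_int c) ^ P * (- of_int b / of_int c) ^ (Q - j)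
        * (bernfun_left j (lin_b w) * eulerfun_left (P + Q - j) (lin_c w)))"

lemma eb_kernel_jump: "eb_kernel w - eb_kernel_left w = jump_c w + jump_b w + jump_a w"
proof -
  define r where "r = - of_int a / (of_int c :: real)"
  define s where "s = - of_int b / (of_int c :: real)"
  define K2 where "K2 = binom_conv3 P Q r s
    (\<lambda>i. eulerfun i (lin_a w)) (\<lambda>j. bernfun j (lin_b w)) (\<lambda>l. eulerfun_left l (lin_c w))"
  define K3 where "K3 = binom_conv3 P Q r s
    (\<lambda>i. eulerfun i (lin_a w)) (\<lambda>j. bernfun_left j (lin_b w)) (\<lambda>l. eulerfun_left l (lin_c w))"
  have euler_jump: "(\<lambda>n. eulerfun n X - eulerfun_left n X)
      = (\<lambda>n. if n = 0 then eulerfun 0 X - eulerfun_left 0 X else 0)" for X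
    by (auto simp: eulerfun_jump)
  have bern_jump: "(\<lambda>n. bernfun n X - bernfun_left n X)
      = (\<lambda>n. if n = 1 then bernfun 1 X - bernfun_left 1 X else 0)" for X
    by (auto simp: bernfun_jump)
  have "eb_kernel w - K2 = jump_c w"
    unfolding eb_kernel_def K2_def r_def s_def binom_conv3_diff3 euler_jump binom_conv3_delta3 jump_c_def ..
  moreover have "K2 - K3 = jump_b w"
    unfolding K2_def K3_def binom_conv3_diff2 bern_jump binom_conv3_delta2[OF Q_pos] jump_b_def r_def s_def ..
  moreover have "K3 - eb_kernel_left w = jump_a w"
    unfolding K3_def eb_kernel_left_def r_def s_def binom_conv3_diff1 euler_jump binom_conv3_delta1 jump_a_def ..
  ultimately show ?thesis
    by simp
qed

lemma jump_c_add_1: "jump_c (w + 1) = jump_c w"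
  unfolding jump_c_def lin_add_1 eulerfun_add_int bernfun_add_int eulerfun_left_add_int
  by (cases "even a") (simp_all add: power_int_minus_left even_c_iff_even_a algebra_simps)

lemma jump_b_add_1: "jump_b (w + 1) = jump_b w"
  unfolding jump_b_def lin_add_1 eulerfun_add_int bernfun_add_int eulerfun_left_add_int
    bernfun_left_add_int
  by (cases "even a") (simp_all add: power_int_minus_left even_c_iff_even_a)

lemma jump_a_add_1: "jump_a (w + 1) = jump_a w"
  unfolding jump_a_def lin_add_1 eulerfun_add_int eulerfun_left_add_int bernfun_left_add_int
  by (cases "even a") (simp_all add: power_int_minus_left even_c_iff_even_a sum_negf algebra_simps)

lemma sum_jump_c:
  assumes "lin_c u \<notin> \<int>"
  shows "(\<Sum>w | u < w \<and> w < u + 1 \<and> lin_c w \<in> \<int>. jump_c w) = 2 * S35 (Suc P) Q a b c x y z"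
proof -
  have "(\<Sum>w | u < w \<and> w < u + 1 \<and> lin_c w \<in> \<int>. jump_c w)
      = (\<Sum>\<mu><nat c. jump_c ((real \<mu> - - z) / of_int c))"
    using sum_lattice_points_periodic[OF c_pos, of u "- z" jump_c] assms jump_c_add_1
    by (simp add: lin_c_def)
  also have "\<dots> = (\<Sum>\<mu><nat c. 2 * ((-1) ^ \<mu> * eulerfun P (of_int a * ((real \<mu> + z) / of_int c) + x)
      * bernfun Q (of_int b * ((real \<mu> + z) / of_int c) + y)))"
  proof (rule sum.cong[OF refl])
    fix \<mu>
    have "lin_c ((real \<mu> + z) / of_int c) = real \<mu>"
      using c_pos by (simp add: lin_c_def field_simps)
    then show "jump_c ((real \<mu> - - z) / of_int c) = 2 * ((-1) ^ \<mu>
        * eulerfun P (of_int a * ((real \<mu> + z) / of_int c) + x) * bernfun Q (of_int b * ((real \<mu> + z) / of_int c) + y))"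
      by (simp add: jump_c_def eulerfun_jump lin_a_def lin_b_def)
  qed
  also have "\<dots> = 2 * S35 (Suc P) Q a b c x y z"
    by (simp add: S35_def sum_distrib_left atLeast0LessThan mult.assoc)
  finally show ?thesis .
qed

lemma jump_b_at_reflected_lattice_point:
  assumes "lin_b (- t) \<in> \<int>"
  shows "jump_b (- t) = real Q * (\<Sum>i\<le>P. real (P choose i)
      * (of_int a / of_int c) ^ (P - i) * (of_int b / of_int c) ^ (Q - 1)
      * (eulerfun (P + Q - i - 1) (of_int c * t + z) * eulerfun i (of_int (- a) * t + x)))"
proof -
  have jump: "bernfun 1 (lin_b (- t)) - bernfun_left 1 (lin_b (- t)) = -1"
    using assms by (simp add: bernfun_jump)
  have lin: "lin_a (- t) = of_int (- a) * t + x" "lin_c (- t) = - (of_int c * t + z)"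
    by (simp_all add: lin_a_def lin_c_def)
  have "jump_b (- t) = -1 * (\<Sum>i\<le>P. real (P choose i) * real Q
      * (- of_int a / of_int c) ^ (P - i) * (- of_int b / of_int c) ^ (Q - 1)
      * (eulerfun i (of_int (- a) * t + x)
         * ((-1) ^ Suc (P + Q - i - 1) * eulerfun (P + Q - i - 1) (of_int c * t + z))))"
    unfolding jump_b_def jump lin eulerfun_left_uminus ..
  also have "\<dots> = real Q * (\<Sum>i\<le>P. real (P choose i)
      * (of_int a / of_int c) ^ (P - i) * (of_int b / of_int c) ^ (Q - 1)
      * (eulerfun (P + Q - i - 1) (of_int c * t + z) * eulerfun i (of_int (- a) * t + x)))"
    unfolding sum_distrib_left
  proof (rule sum.cong[OF refl])
    fix i
    assume "i \<in> {..P}"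
    then have "Suc (P + Q - i - 1) = (P - i) + (Q - 1) + 1"
      using Q_pos by simp
    then show "-1 * (real (P choose i) * real Q
        * (- of_int a / of_int c) ^ (P - i) * (- of_int b / of_int c) ^ (Q - 1)
        * (eulerfun i (of_int (- a) * t + x)
           * ((-1) ^ Suc (P + Q - i - 1) * eulerfun (P + Q - i - 1) (of_int c * t + z))))
      = real Q * (real (P choose i) * (of_int a / of_int c) ^ (P - i) * (of_int b / of_int c) ^ (Q - 1)
        * (eulerfun (P + Q - i - 1) (of_int c * t + z) * eulerfun i (of_int (- a) * t + x)))"
      using minus_power_sign[of "of_int a / of_int c" "P - i" "of_int b / of_int c" "Q - 1"
          "real (P choose i) * real Q * eulerfun (P + Q - i - 1) (of_int c * t + z)
            * eulerfun i (of_int (- a) * t + x)"]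
      by (simp add: mult_ac)
  qed
  finally show ?thesis .
qed

lemma sum_jump_b:
  assumes "lin_b u \<notin> \<int>"
  shows "(\<Sum>w | u < w \<and> w < u + 1 \<and> lin_b w \<in> \<int>. jump_b w)
    = real Q * (\<Sum>i\<le>P. real (P choose i) * (of_int a / of_int c) ^ (P - i) * (of_int b / of_int c) ^ (Q - 1)
        * S4 (P + Q - i) (Suc i) c (- a) b z x y)"
proof -
  define t where "t \<mu> = (real \<mu> + y) / of_int b" for \<mu> :: nat
  have "lin_b (- t \<mu>) \<in> \<int>" for \<mu>
    using b_pos by (simp add: lin_b_def t_def field_simps)
  then have "(\<Sum>w | u < w \<and> w < u + 1 \<and> lin_b w \<in> \<int>. jump_b w)
      = (\<Sum>\<mu><nat b. real Q * (\<Sum>i\<le>P. real (P choose i)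
          * (of_int a / of_int c) ^ (P - i) * (of_int b / of_int c) ^ (Q - 1)
          * (eulerfun (P + Q - i - 1) (of_int c * t \<mu> + z) * eulerfun i (of_int (- a) * t \<mu> + x))))"
    using sum_lattice_points_periodic_reflect[OF b_pos, of u y jump_b] assms jump_b_add_1
    by (simp add: lin_b_def t_def jump_b_at_reflected_lattice_point)
  then show ?thesis
    by (simp add: S4_def t_def sum_distrib_left atLeast0LessThan mult.assoc sum.swap[of _ "{..<nat b}"])
qed

lemma jump_a_at_reflected_lattice_point:
  assumes "lin_a (- t) = - real \<mu>"
  shows "jump_a (- t) = - 2 * (\<Sum>j\<le>Q. (-1) ^ j * real (Q choose j)
      * (of_int a / of_int c) ^ P * (of_int b / of_int c) ^ (Q - j)
      * ((-1) ^ \<mu> * eulerfun (P + Q - j) (of_int c * t + z) * bernfun j (of_int b * t + - y)))"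
proof -
  have jump: "eulerfun 0 (lin_a (- t)) - eulerfun_left 0 (lin_a (- t)) = 2 * (-1) ^ \<mu>"
    using assms by (simp add: eulerfun_jump floor_minus power_int_minus_one_minus)
  have lin: "lin_b (- t) = - (of_int b * t + - y)" "lin_c (- t) = - (of_int c * t + z)"
    by (simp_all add: lin_b_def lin_c_def)
  have "jump_a (- t) = 2 * (-1) ^ \<mu> * (\<Sum>j\<le>Q. real (Q choose j)
      * (- of_int a / of_int c) ^ P * (- of_int b / of_int c) ^ (Q - j)
      * ((-1) ^ j * bernfun j (of_int b * t + - y)
         * ((-1) ^ Suc (P + Q - j) * eulerfun (P + Q - j) (of_int c * t + z))))"
    unfolding jump_a_def jump lin eulerfun_left_uminus bernfun_left_uminus ..
  also have "\<dots> = - 2 * (\<Sum>j\<le>Q. (-1) ^ j * real (Q choose j)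
      * (of_int a / of_int c) ^ P * (of_int b / of_int c) ^ (Q - j)
      * ((-1) ^ \<mu> * eulerfun (P + Q - j) (of_int c * t + z) * bernfun j (of_int b * t + - y)))"
    unfolding sum_distrib_left
  proof (rule sum.cong[OF refl])
    fix j
    assume "j \<in> {..Q}"
    then have "Suc (P + Q - j) = P + (Q - j) + 1"
      by simp
    then show "2 * (-1) ^ \<mu> * (real (Q choose j)
        * (- of_int a / of_int c) ^ P * (- of_int b / of_int c) ^ (Q - j)
        * ((-1) ^ j * bernfun j (of_int b * t + - y)
           * ((-1) ^ Suc (P + Q - j) * eulerfun (P + Q - j) (of_int c * t + z))))
      = - 2 * ((-1) ^ j * real (Q choose j) * (of_int a / of_int c) ^ P * (of_int b / of_int c) ^ (Q - j)
        * ((-1) ^ \<mu> * eulerfun (P + Q - j) (of_int c * t + z) * bernfun j (of_int b * t + - y)))"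
      using minus_power_sign[of "of_int a / of_int c" P "of_int b / of_int c" "Q - j"
          "(-1) ^ j * real (Q choose j) * ((-1) ^ \<mu> * eulerfun (P + Q - j) (of_int c * t + z)
            * bernfun j (of_int b * t + - y))"]
      by (simp add: mult_ac)
  qed
  finally show ?thesis .
qed

lemma sum_jump_a:
  assumes "lin_a u \<notin> \<int>"
  shows "(\<Sum>w | u < w \<and> w < u + 1 \<and> lin_a w \<in> \<int>. jump_a w)
    = - 2 * (\<Sum>j\<le>Q. (-1) ^ j * real (Q choose j) * (of_int a / of_int c) ^ P * (of_int b / of_int c) ^ (Q - j)
        * S35 (P + Q - j + 1) j c b a z (- y) x)"
proof -
  define t where "t \<mu> = (real \<mu> + x) / of_int a" for \<mu> :: nat
  have "lin_a (- t \<mu>) = - real \<mu>" for \<mu>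
    using a_pos by (simp add: lin_a_def t_def field_simps)
  then have "(\<Sum>w | u < w \<and> w < u + 1 \<and> lin_a w \<in> \<int>. jump_a w)
      = (\<Sum>\<mu><nat a. - 2 * (\<Sum>j\<le>Q. (-1) ^ j * real (Q choose j)
          * (of_int a / of_int c) ^ P * (of_int b / of_int c) ^ (Q - j)
          * ((-1) ^ \<mu> * eulerfun (P + Q - j) (of_int c * t \<mu> + z) * bernfun j (of_int b * t \<mu> + - y))))"
    using sum_lattice_points_periodic_reflect[OF a_pos, of u x jump_a] assms jump_a_add_1
    by (simp add: lin_a_def t_def jump_a_at_reflected_lattice_point)
  then show ?thesis
    by (simp add: S35_def t_def sum_distrib_left atLeast0LessThan mult.assoc sum.swap[of _ "{..<nat a}"]
        flip: sum_negf)
qed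

lemma jump_c_eq_0: "lin_c w \<notin> \<int> \<Longrightarrow> jump_c w = 0"
  by (simp add: jump_c_def eulerfun_jump)

lemma jump_b_eq_0: "lin_b w \<notin> \<int> \<Longrightarrow> jump_b w = 0"
  by (simp add: jump_b_def bernfun_jump)

lemma jump_a_eq_0: "lin_a w \<notin> \<int> \<Longrightarrow> jump_a w = 0"
  by (simp add: jump_a_def eulerfun_jump)

definition jump_points :: "real \<Rightarrow> real \<Rightarrow> real set" where
  "jump_points u v = {w. u < w \<and> w < v \<and> (lin_a w \<in> \<int> \<or> lin_b w \<in> \<int> \<or> lin_c w \<in> \<int>)}"

lemma finite_jump_points: "finite (jump_points u v)"
proof -
  have "jump_points u v
      = {w. u < w \<and> w < v \<and> of_int a * w + x \<in> \<int>} \<union> {w. u < w \<and> w < v \<and> of_int b * w + y \<in> \<int>}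
        \<union> {w. u < w \<and> w < v \<and> of_int c * w + - z \<in> \<int>}"
    by (auto simp: jump_points_def lin_a_def lin_b_def lin_c_def)
  then show ?thesis
    using lattice_points_finite[of "of_int a" u v x] lattice_points_finite[of "of_int b" u v y]
      lattice_points_finite[of "of_int c" u v "- z"] a_pos b_pos c_pos
    by simp
qed

lemma generic_point_exists: "\<exists>u. lin_a u \<notin> \<int> \<and> lin_b u \<notin> \<int> \<and> lin_c u \<notin> \<int>"
proof -
  have "infinite ({0<..<(1::real)} - jump_points 0 1)"
    using Diff_infinite_finite[OF finite_jump_points infinite_Ioo] by simp
  then obtain u where "u \<in> {0<..<(1::real)} - jump_points 0 1"
    using infinite_imp_nonempty by blast
  then show ?thesis
    by (auto simp: jump_points_def)
qed

lemma sum_eb_kernel_jumps: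
  assumes "lin_a u \<notin> \<int>" "lin_b u \<notin> \<int>" "lin_c u \<notin> \<int>"
  shows "(\<Sum>w\<in>jump_points u (u + 1). eb_kernel w - eb_kernel_left w) = 0"
proof -
  have "(\<Sum>w\<in>jump_points u (u + 1) \<inter> {u<..<u + 1}. eb_kernel w - eb_kernel_left w)
      = eb_kernel_left (u + 1) - eb_kernel u"
  proof (rule sum_jumps_eq_total_change[OF finite_jump_points])
    show "eb_kernel s = eb_kernel_left t"
      if "u \<le> s" "s < t" "t \<le> u + 1" "{s<..<t} \<inter> jump_points u (u + 1) = {}" for s t
      using that by (intro eb_kernel_eq_left_if_no_lattice_point) (auto simp: jump_points_def)
  qed simp
  moreover have "jump_points u (u + 1) \<inter> {u<..<u + 1} = jump_points u (u + 1)"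
    by (auto simp: jump_points_def)
  moreover have "eb_kernel_left (u + 1) = eb_kernel u"
    using assms eb_kernel_left_nonint[of "u + 1"] eb_kernel_add_1[of u]
    by (simp add: lin_add_1)
  ultimately show ?thesis
    by simp
qed

lemma reciprocity_law:
  "S35 (Suc P) Q a b c x y z
    = - (real Q / 2) * (\<Sum>i\<le>P. real (P choose i) * (of_int a / of_int c) ^ (P - i) * (of_int b / of_int c) ^ (Q - 1)
          * S4 (P + Q - i) (Suc i) c (- a) b z x y)
      + (\<Sum>j\<le>Q. (-1) ^ j * real (Q choose j) * (of_int a / of_int c) ^ P * (of_int b / of_int c) ^ (Q - j)
          * S35 (P + Q - j + 1) j c b a z (- y) x)"
proof -
  obtain u where u: "lin_a u \<notin> \<int>" "lin_b u \<notin> \<int>" "lin_c u \<notin> \<int>"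
    using generic_point_exists by blast
  define K where "K = jump_points u (u + 1)"
  have fin: "finite K"
    unfolding K_def by (rule finite_jump_points)
  have "0 = (\<Sum>w\<in>K. eb_kernel w - eb_kernel_left w)"
    unfolding K_def using sum_eb_kernel_jumps[OF u] by simp
  also have "\<dots> = (\<Sum>w\<in>K. jump_c w) + (\<Sum>w\<in>K. jump_b w) + (\<Sum>w\<in>K. jump_a w)"
    by (simp add: eb_kernel_jump sum.distrib)
  also have "(\<Sum>w\<in>K. jump_c w) = (\<Sum>w | u < w \<and> w < u + 1 \<and> lin_c w \<in> \<int>. jump_c w)"
    by (rule sum.mono_neutral_right[OF fin]) (auto simp: K_def jump_points_def jump_c_eq_0)
  also have "(\<Sum>w\<in>K. jump_b w) = (\<Sum>w | u < w \<and> w < u + 1 \<and> lin_b w \<in> \<int>. jump_b w)"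
    by (rule sum.mono_neutral_right[OF fin]) (auto simp: K_def jump_points_def jump_b_eq_0)
  also have "(\<Sum>w\<in>K. jump_a w) = (\<Sum>w | u < w \<and> w < u + 1 \<and> lin_a w \<in> \<int>. jump_a w)"
    by (rule sum.mono_neutral_right[OF fin]) (auto simp: K_def jump_points_def jump_a_eq_0)
  finally show ?thesis
    unfolding sum_jump_c[OF u(3)] sum_jump_b[OF u(2)] sum_jump_a[OF u(1)] by simp
qed

lemma reciprocity_law_powi:
  "of_int a powi (1 - int (Suc P)) * of_int b powi (1 - int Q) * S35 (Suc P) Q a b c x y z
    = - (real Q / 2) * (\<Sum>j=1..Suc P. real ((Suc P - 1) choose (j - 1))
          * of_int a powi (1 - int j) * of_int c powi (1 + int j - int (Suc P) - int Q)
          * S4 (Suc P + Q - j) j c (- a) b z x y)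
      + (\<Sum>h=0..Q. real (Q choose h) * (-1) ^ h
          * of_int b powi (1 - int h) * of_int c powi (1 + int h - int (Suc P) - int Q)
          * S35 (Suc P + Q - h) h c b a z (- y) x)"
proof -
  define A B C where "A = (of_int a :: real)" "B = (of_int b :: real)" "C = (of_int c :: real)"
  have nonzero: "A \<noteq> 0" "B \<noteq> 0" "C \<noteq> 0"
    using a_pos b_pos c_pos by (simp_all add: A_B_C_def)
  note S4_coeff = powi_rescale_S4_coeff[OF nonzero _ Q_pos]
  note S35_coeff = powi_rescale_S35_coeff[OF nonzero]
  have "A powi (1 - int (Suc P)) * B powi (1 - int Q) * S35 (Suc P) Q a b c x y z
      = - (real Q / 2) * (\<Sum>i\<le>P. real (P choose i)
          * (A powi (- int P) * B powi (1 - int Q) * ((A / C) ^ (P - i) * (B / C) ^ (Q - 1)))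
          * S4 (P + Q - i) (Suc i) c (- a) b z x y)
        + (\<Sum>h\<le>Q. real (Q choose h) * (-1) ^ h
          * (A powi (- int P) * B powi (1 - int Q) * ((A / C) ^ P * (B / C) ^ (Q - h)))
          * S35 (P + Q - h + 1) h c b a z (- y) x)"
    unfolding reciprocity_law A_B_C_def
    by (simp add: sum_distrib_left algebra_simps)
  also have "\<dots> = - (real Q / 2) * (\<Sum>i\<le>P. real (P choose i)
          * A powi (1 - int (Suc i)) * C powi (1 + int (Suc i) - int (Suc P) - int Q)
          * S4 (Suc P + Q - Suc i) (Suc i) c (- a) b z x y)
        + (\<Sum>h\<le>Q. real (Q choose h) * (-1) ^ h
          * B powi (1 - int h) * C powi (1 + int h - int (Suc P) - int Q)
          * S35 (Suc P + Q - h) h c b a z (- y) x)"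
    by (intro arg_cong2[where f="\<lambda>u v. - (real Q / 2) * u + v"] sum.cong refl;
        (subst S4_coeff | subst S35_coeff); auto simp: Suc_diff_le)
  also have "(\<Sum>i\<le>P. real (P choose i)
          * A powi (1 - int (Suc i)) * C powi (1 + int (Suc i) - int (Suc P) - int Q)
          * S4 (Suc P + Q - Suc i) (Suc i) c (- a) b z x y)
      = (\<Sum>j=1..Suc P. real ((Suc P - 1) choose (j - 1))
          * A powi (1 - int j) * C powi (1 + int j - int (Suc P) - int Q)
          * S4 (Suc P + Q - j) j c (- a) b z x y)"
    unfolding One_nat_def sum.shift_bounds_cl_Suc_ivl atLeast0AtMost by simp
  finally show ?thesis
    unfolding A_B_C_def atLeast0AtMost .
qed

end

theorem theorem5:
  fixes a b c :: int and p q :: nat and x y z :: real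
  assumes "a > 0" "b > 0" "c > 0"
    and "coprime a b" "coprime b c" "coprime a c"
    and "even (a + c)"
    and "p \<ge> 1" "q \<ge> 1"
  shows "real_of_int a powi (1 - int p) * real_of_int b powi (1 - int q) * S35 p q a b c x y z
    = - (real q / 2) * (\<Sum>j=1..p. real ((p - 1) choose (j - 1))
          * real_of_int a powi (1 - int j) * real_of_int c powi (1 + int j - int p - int q)
          * S4 (p + q - j) j c (-a) b z x y)
      + (\<Sum>h=0..q. real (q choose h) * (-1) ^ h
          * real_of_int b powi (1 - int h) * real_of_int c powi (1 + int h - int p - int q)
          * S35 (p + q - h) h c b a z (-y) x)"
proof -
  obtain P where p: "p = Suc P"
    using \<open>p \<ge> 1\<close> by (cases p) auto
  interpret reciprocity_setting a b c x y z P q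
    by unfold_locales (use assms in auto)
  show ?thesis
    unfolding p by (rule reciprocity_law_powi)
qed

end
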